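(* Let $f$ be a quadratic rational map. If there exists $k\in\mathbb{N}$ such that $\mathrm{Deck}(f^k)\cong V_4$ (the Klein four-group), then the minimal such $k$ is $k=2$.
   Context: $\mathrm{Deck}(F)=\{\tau \text{ Möbius} : F\circ\tau=F\}$; $f^k$ is the $k$-th iterate. *)

theory Defs
  imports "HOL-Computational_Algebra.Polynomial" "HOL-Algebra.Elementary_Groups"
begin

text \<open>The Riemann sphere: None is the point at infinity.\<close>
type_synonym rsphere = "complex option"

fun rat_eval :: "complex poly \<Rightarrow> complex poly \<Rightarrow> rsphere \<Rightarrow> rsphere" where
  "rat_eval p q (Some z) = (if poly q z = 0 then None else Some (poly p z / poly q z))"
| "rat_eval p q None = (if degree p > degree q then None
      else if degree p = degree q then Some (lead_coeff p / lead_coeff q) else Some 0)"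

definition rat_map_deg :: "nat \<Rightarrow> (rsphere \<Rightarrow> rsphere) \<Rightarrow> bool" where
  "rat_map_deg d F \<longleftrightarrow> (\<exists>p q. q \<noteq> 0 \<and> coprime p q \<and> max (degree p) (degree q) = d
                              \<and> F = rat_eval p q)"

definition mobius :: "(rsphere \<Rightarrow> rsphere) \<Rightarrow> bool" where
  "mobius \<tau> \<longleftrightarrow> rat_map_deg 1 \<tau>"

definition Deck :: "(rsphere \<Rightarrow> rsphere) \<Rightarrow> (rsphere \<Rightarrow> rsphere) set" where
  "Deck F = {\<tau>. mobius \<tau> \<and> F \<circ> \<tau> = F}"

definition deck_group :: "(rsphere \<Rightarrow> rsphere) \<Rightarrow> (rsphere \<Rightarrow> rsphere) monoid" where
  "deck_group F = \<lparr>carrier = Deck F, monoid.mult = (\<circ>), one = id\<rparr>"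

definition klein_four :: "(int \<times> int) monoid" where
  "klein_four = integer_mod_group 2 \<times>\<times> integer_mod_group 2"

end

theory Submission
  imports Defs "HOL-Computational_Algebra.Fundamental_Theorem_Algebra"
begin

text \<open>
  A quadratic rational map f = p/q has a nontrivial deck involution \<iota>, whose matrix is built from
  the 2 \<times> 2 minors of the coefficients of p and q, and no other: two distinct Moebius maps agree
  only at finitely many points, while the fibres of f have at most two points. Hence Deck f has
  order 2 and k = 1 is impossible.

  Conversely, let Deck(f^(j+1)) be a Klein four-group with j \<ge> 2 and pick t in it outside
  {id, \<iota>}. The group is abelian, so t commutes with \<iota>, and f \<circ> t is constant on the fibres of f.
  It therefore descends: f \<circ> t = M \<circ> f for a Moebius map M, found by interpolating at three fibres
  (two quadratic maps that agree at six points coincide). Then M \<in> Deck(f^j), and whether M is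
  id, \<iota> or neither, Deck(f^j) acquires a third element; being a submonoid of the Klein group,
  it is the whole group. Descending from k to 2 gives the claim.
\<close>

definition proj_pt :: "complex \<Rightarrow> complex \<Rightarrow> rsphere" where
  "proj_pt x y = (if y = 0 then None else Some (x / y))"

lemma proj_pt_eq_iff:
  assumes "(x,y) \<noteq> (0,0)" "(u,v) \<noteq> (0,0)"
  shows "proj_pt x y = proj_pt u v \<longleftrightarrow> x * v = y * u"
  using assms by (auto simp: proj_pt_def field_simps)

lemma proj_pt_scale: "k \<noteq> 0 \<Longrightarrow> proj_pt (k*x) (k*y) = proj_pt x y"
  by (auto simp: proj_pt_def)

lemma proj_pt_cases: obtains x y where "(x,y) \<noteq> (0,0)" "s = proj_pt x y"
proof (cases s)
  case None thus ?thesis using that[of 1 0] by (auto simp: proj_pt_def)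
next
  case (Some z) thus ?thesis using that[of z 1] by (auto simp: proj_pt_def)
qed

lemma rsphere_fun_eqI:
  assumes "\<And>x y. (x,y) \<noteq> (0,0) \<Longrightarrow> F (proj_pt x y) = G (proj_pt x y)"
  shows "F = G"
proof
  fix s show "F s = G s" by (rule proj_pt_cases[of s]) (use assms in auto)
qed

lemma infinite_rsphere: "infinite (UNIV :: rsphere set)"
proof
  assume "finite (UNIV :: rsphere set)"
  hence "finite (range (Some :: complex \<Rightarrow> rsphere))" by (rule finite_subset[rotated]) auto
  thus False using finite_imageD infinite_UNIV_char_0 inj_Some by blast
qed

lemma ex_rsphere_not_in: "finite (S :: rsphere set) \<Longrightarrow> \<exists>s. s \<notin> S"
  using infinite_rsphere by (metis UNIV_eq_I)

subsection \<open>Binary forms\<close>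

definition homog :: "nat \<Rightarrow> complex poly \<Rightarrow> complex \<Rightarrow> complex \<Rightarrow> complex" where
  "homog n P x y = (\<Sum>i\<le>n. coeff P i * x^i * y^(n-i))"

lemma homog_affine:
  assumes "y \<noteq> 0" "degree P \<le> n"
  shows "homog n P x y = y^n * poly P (x/y)"
proof -
  have "poly P (x/y) = (\<Sum>i\<le>n. coeff P i * (x/y)^i)"
    unfolding poly_altdef
    by (rule sum.mono_neutral_left) (use assms in \<open>auto simp: coeff_eq_0\<close>)
  also have "y^n * \<dots> = (\<Sum>i\<le>n. coeff P i * x^i * y^(n-i))"
    unfolding sum_distrib_left
  proof (rule sum.cong)
    fix i assume "i \<in> {..n}"
    hence "y^n = y^i * y^(n-i)" by (simp add: power_add[symmetric])
    thus "y ^ n * (coeff P i * (x / y) ^ i) = coeff P i * x ^ i * y ^ (n - i)"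
      using assms by (simp add: power_divide field_simps)
  qed simp
  finally show ?thesis by (simp add: homog_def)
qed

lemma homog_y_1: "degree P \<le> n \<Longrightarrow> homog n P x 1 = poly P x"
  using homog_affine[of 1 P n x] by simp

lemma homog_y_0: "homog n P x 0 = coeff P n * x^n"
proof -
  have "homog n P x 0 = (\<Sum>i\<in>{n}. coeff P i * x^i * 0^(n-i))"
    unfolding homog_def by (rule sum.mono_neutral_right) auto
  thus ?thesis by simp
qed

lemma homog_add: "homog n (P + Q) x y = homog n P x y + homog n Q x y"
  by (simp add: homog_def algebra_simps sum.distrib)

lemma homog_diff: "homog n (P - Q) x y = homog n P x y - homog n Q x y"
  by (simp add: homog_def algebra_simps sum_subtractf)

lemma homog_smult: "homog n (smult c P) x y = c * homog n P x y"
  by (simp add: homog_def algebra_simps sum_distrib_left)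

lemma coeff_mult_degree_bounds:
  fixes P Q :: "'a::comm_semiring_0 poly"
  assumes "degree P \<le> m" "degree Q \<le> n"
  shows "coeff (P * Q) (m + n) = coeff P m * coeff Q n"
proof -
  have "coeff (P*Q) (m+n) = (\<Sum>i\<le>m+n. coeff P i * coeff Q (m + n - i))"
    by (simp add: coeff_mult)
  also have "\<dots> = (\<Sum>i\<in>{m}. coeff P i * coeff Q (m + n - i))"
  proof (rule sum.mono_neutral_right)
    show "\<forall>i\<in>{..m + n} - {m}. coeff P i * coeff Q (m + n - i) = 0"
    proof
      fix i assume i: "i \<in> {..m + n} - {m}"
      show "coeff P i * coeff Q (m + n - i) = 0"
        by (cases "i < m") (use assms i in \<open>simp_all add: coeff_eq_0\<close>)
    qed
  qed auto
  finally show ?thesis by simp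
qed

lemma homog_mult:
  assumes "degree P \<le> m" "degree Q \<le> n"
  shows "homog (m+n) (P*Q) x y = homog m P x y * homog n Q x y"
proof (cases "y = 0")
  case True thus ?thesis
    using coeff_mult_degree_bounds[OF assms] by (simp add: homog_y_0 power_add)
next
  case False
  have "degree (P*Q) \<le> m + n" using assms degree_mult_le[of P Q] by linarith
  thus ?thesis using False assms by (simp add: homog_affine power_add)
qed

lemma homog_1: "homog 1 P x y = coeff P 0 * y + coeff P 1 * x"
  by (simp add: homog_def)

lemma homog_2: "homog 2 P x y = coeff P 0 * y^2 + coeff P 1 * x * y + coeff P 2 * x^2"
  by (simp add: homog_def numeral_2_eq_2 atMost_Suc algebra_simps)

definition bin_form :: "nat \<Rightarrow> (complex \<Rightarrow> complex \<Rightarrow> complex) \<Rightarrow> bool" where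
  "bin_form n E \<longleftrightarrow> (\<exists>P. degree P \<le> n \<and> E = homog n P)"

lemma bin_form_homog: "degree P \<le> n \<Longrightarrow> bin_form n (homog n P)"
  by (auto simp: bin_form_def)

lemma bin_form_add: "bin_form n A \<Longrightarrow> bin_form n B \<Longrightarrow> bin_form n (\<lambda>x y. A x y + B x y)"
  unfolding bin_form_def
proof (elim exE conjE)
  fix P Q assume "degree P \<le> n" "A = homog n P" "degree Q \<le> n" "B = homog n Q"
  thus "\<exists>R. degree R \<le> n \<and> (\<lambda>x y. A x y + B x y) = homog n R"
    by (intro exI[of _ "P+Q"]) (auto simp: homog_add degree_add_le fun_eq_iff)
qed

lemma bin_form_diff: "bin_form n A \<Longrightarrow> bin_form n B \<Longrightarrow> bin_form n (\<lambda>x y. A x y - B x y)"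
  unfolding bin_form_def
proof (elim exE conjE)
  fix P Q assume "degree P \<le> n" "A = homog n P" "degree Q \<le> n" "B = homog n Q"
  thus "\<exists>R. degree R \<le> n \<and> (\<lambda>x y. A x y - B x y) = homog n R"
    by (intro exI[of _ "P-Q"]) (auto simp: homog_diff degree_diff_le fun_eq_iff)
qed

lemma bin_form_cmult: "bin_form n A \<Longrightarrow> bin_form n (\<lambda>x y. c * A x y)"
  unfolding bin_form_def
proof (elim exE conjE)
  fix P assume "degree P \<le> n" "A = homog n P"
  thus "\<exists>R. degree R \<le> n \<and> (\<lambda>x y. c * A x y) = homog n R"
    by (intro exI[of _ "smult c P"]) (auto simp: homog_smult fun_eq_iff)
qed

lemma bin_form_mult: "bin_form m A \<Longrightarrow> bin_form n B \<Longrightarrow> bin_form (m+n) (\<lambda>x y. A x y * B x y)"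
  unfolding bin_form_def
proof (elim exE conjE)
  fix P Q assume "degree P \<le> m" "A = homog m P" "degree Q \<le> n" "B = homog n Q"
  thus "\<exists>R. degree R \<le> m + n \<and> (\<lambda>x y. A x y * B x y) = homog (m + n) R"
    using degree_mult_le[of P Q] by (intro exI[of _ "P*Q"]) (auto simp: homog_mult fun_eq_iff)
qed

lemma bin_form_const_1: "bin_form 0 (\<lambda>x y. 1)"
  unfolding bin_form_def by (intro exI[of _ 1]) (auto simp: homog_def fun_eq_iff)

lemma bin_form_zero: "bin_form n (\<lambda>x y. 0)"
  unfolding bin_form_def by (intro exI[of _ 0]) (auto simp: homog_def fun_eq_iff)

lemma bin_form_linear: "bin_form 1 (\<lambda>x y. a*x + b*y)"
  unfolding bin_form_def by (intro exI[of _ "[:b,a:]"]) (auto simp: homog_def fun_eq_iff)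

lemma bin_form_power: "bin_form n A \<Longrightarrow> bin_form (n*k) (\<lambda>x y. A x y ^ k)"
proof (induction k)
  case 0 thus ?case using bin_form_const_1 by simp
next
  case (Suc k)
  have "bin_form (n + n*k) (\<lambda>x y. A x y * A x y ^ k)"
    by (rule bin_form_mult) (use Suc in auto)
  thus ?case by (simp add: algebra_simps)
qed

lemma bin_form_sum:
  assumes "finite S" "\<And>i. i \<in> S \<Longrightarrow> bin_form n (E i)"
  shows "bin_form n (\<lambda>x y. \<Sum>i\<in>S. E i x y)"
  using assms
proof (induction S rule: finite_induct)
  case empty thus ?case using bin_form_zero by simp
next
  case (insert a S)
  thus ?case by (simp add: bin_form_add)
qed

lemma bin_form_compose:
  assumes A: "bin_form m A" and C: "bin_form n C" and D: "bin_form n D"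
  shows "bin_form (m*n) (\<lambda>x y. A (C x y) (D x y))"
proof -
  obtain P where P: "degree P \<le> m" "A = homog m P" using A by (auto simp: bin_form_def)
  have "bin_form (m*n) (\<lambda>x y. \<Sum>i\<le>m. coeff P i * C x y ^ i * D x y ^ (m-i))"
  proof (rule bin_form_sum)
    fix i assume i: "i \<in> {..m}"
    have "bin_form (n*i + n*(m-i)) (\<lambda>x y. C x y ^ i * D x y ^ (m-i))"
      by (rule bin_form_mult) (use C D bin_form_power in auto)
    hence "bin_form (n*i + n*(m-i)) (\<lambda>x y. coeff P i * (C x y ^ i * D x y ^ (m-i)))"
      by (rule bin_form_cmult)
    moreover have "n*i + n*(m-i) = m*n"
      using i by (simp add: algebra_simps flip: add_mult_distrib2)
    ultimately show "bin_form (m*n) (\<lambda>x y. coeff P i * C x y ^ i * D x y ^ (m-i))"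
      by (simp add: mult.assoc)
  qed simp
  thus ?thesis by (simp add: P homog_def)
qed

definition proj_zeros :: "(complex \<Rightarrow> complex \<Rightarrow> complex) \<Rightarrow> rsphere set" where
  "proj_zeros E = {s. \<exists>x y. (x,y) \<noteq> (0,0) \<and> s = proj_pt x y \<and> E x y = 0}"

lemma bin_form_proj_zeros_card_le:
  assumes "bin_form n E" "\<exists>x y. E x y \<noteq> 0"
  shows "finite (proj_zeros E) \<and> card (proj_zeros E) \<le> n"
proof -
  obtain P where P: "degree P \<le> n" "E = homog n P" using assms by (auto simp: bin_form_def)
  have "P \<noteq> 0" using P assms(2) by (auto simp: homog_def)
  let ?R = "{z. poly P z = 0}"
  let ?N = "(if coeff P n = 0 then {None} else {}) :: rsphere set"
  have sub: "proj_zeros E \<subseteq> Some ` ?R \<union> ?N"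
  proof
    fix s assume "s \<in> proj_zeros E"
    then obtain x y where xy: "(x,y) \<noteq> (0,0)" "s = proj_pt x y" "E x y = 0"
      by (auto simp: proj_zeros_def)
    show "s \<in> Some ` ?R \<union> ?N"
      by (cases "y = 0") (use xy P in \<open>auto simp: proj_pt_def homog_y_0 homog_affine\<close>)
  qed
  have finR: "finite ?R" using poly_roots_finite[OF \<open>P \<noteq> 0\<close>] .
  have fin: "finite (Some ` ?R \<union> ?N)" using finR by simp
  have "card (Some ` ?R \<union> ?N) \<le> card (Some ` ?R) + card ?N" by (rule card_Un_le)
  also have "\<dots> \<le> card ?R + card ?N" using card_image_le[OF finR, of Some] by simp
  also have "\<dots> \<le> n"
  proof (cases "coeff P n = 0")
    case True
    hence "degree P < n" using P \<open>P \<noteq> 0\<close> by (metis le_neq_implies_less leading_coeff_0_iff)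
    thus ?thesis using card_poly_roots_bound[OF \<open>P \<noteq> 0\<close>] True by simp
  next
    case False thus ?thesis using card_poly_roots_bound[OF \<open>P \<noteq> 0\<close>] P by simp
  qed
  finally show ?thesis
    using sub fin by (meson card_mono finite_subset order_trans)
qed

lemma bin_form_has_proj_zero:
  assumes "bin_form n E" "n \<ge> 1"
  obtains x y where "(x,y) \<noteq> (0,0)" "E x y = 0"
proof -
  obtain P where P: "degree P \<le> n" "E = homog n P" using assms by (auto simp: bin_form_def)
  show ?thesis
  proof (cases "coeff P n = 0")
    case True thus ?thesis using P that[of 1 0] by (simp add: homog_y_0)
  next
    case False
    hence "degree P = n" using P by (metis le_antisym le_degree)
    hence "\<not> constant (poly P)" using assms constant_degree[of P] by simp
    then obtain z where "poly P z = 0" using fundamental_theorem_of_algebra by blast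
    thus ?thesis using P that[of z 1] by (simp add: homog_y_1)
  qed
qed

subsection \<open>Maps of the sphere in homogeneous coordinates\<close>

definition homog_lift :: "nat \<Rightarrow> (rsphere \<Rightarrow> rsphere) \<Rightarrow> (complex \<Rightarrow> complex \<Rightarrow> complex)
    \<Rightarrow> (complex \<Rightarrow> complex \<Rightarrow> complex) \<Rightarrow> bool" where
  "homog_lift n F A B \<longleftrightarrow> bin_form n A \<and> bin_form n B \<and>
     (\<forall>x y. (x,y) \<noteq> (0,0) \<longrightarrow> (A x y, B x y) \<noteq> (0,0) \<and> F (proj_pt x y) = proj_pt (A x y) (B x y))"

lemma homog_liftD:
  assumes "homog_lift n F A B" "(x,y) \<noteq> (0,0)"
  shows "(A x y, B x y) \<noteq> (0,0)" "F (proj_pt x y) = proj_pt (A x y) (B x y)"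
  using assms by (auto simp: homog_lift_def)

lemma poly_common_root_not_coprime:
  fixes p q :: "complex poly"
  assumes "coprime p q" "poly p z = 0" "poly q z = 0"
  shows False
proof -
  have "[:-z,1:] dvd p" "[:-z,1:] dvd q" using assms by (simp_all add: poly_eq_0_iff_dvd)
  hence "is_unit [:-z,1:]" using assms(1) coprime_common_divisor by blast
  thus False by (simp add: is_unit_iff_degree)
qed

lemma coprime_if_no_common_root:
  fixes p q :: "complex poly"
  assumes "\<And>z. poly p z = 0 \<Longrightarrow> poly q z = 0 \<Longrightarrow> False"
  shows "coprime p q"
  unfolding coprime_def
proof (intro allI impI)
  fix c assume c: "c dvd p" "c dvd q"
  have "c \<noteq> 0" using c assms[of 0] by auto
  moreover have "degree c = 0"
  proof (rule ccontr)
    assume "degree c \<noteq> 0"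
    hence "\<not> constant (poly c)" using constant_degree[of c] by simp
    then obtain z where "poly c z = 0" using fundamental_theorem_of_algebra by blast
    thus False using c assms by (metis dvd_trans poly_eq_0_iff_dvd)
  qed
  ultimately show "is_unit c" by (simp add: is_unit_iff_degree)
qed

lemma homog_lift_rat_eval:
  assumes q: "q \<noteq> 0" and cp: "coprime p q" and d: "max (degree p) (degree q) = d"
  shows "homog_lift d (rat_eval p q) (homog d p) (homog d q)"
proof -
  have "(homog d p x y, homog d q x y) \<noteq> (0,0) \<and>
        rat_eval p q (proj_pt x y) = proj_pt (homog d p x y) (homog d q x y)"
    if xy: "(x,y) \<noteq> (0,0)" for x y
  proof (cases "y = 0")
    case False
    have "\<not> (poly p (x/y) = 0 \<and> poly q (x/y) = 0)" using poly_common_root_not_coprime[OF cp] by blast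
    thus ?thesis using False d by (auto simp: homog_affine proj_pt_def)
  next
    case True
    hence x: "x \<noteq> 0" using xy by auto
    consider "degree p > degree q" | "degree p = degree q" | "degree p < degree q" by linarith
    thus ?thesis
    proof cases
      case 1
      hence "coeff p d \<noteq> 0" "coeff q d = 0" using d by (auto simp: coeff_eq_0)
      thus ?thesis using True x 1 by (simp add: homog_y_0 proj_pt_def)
    next
      case 2
      hence "degree p = d" "degree q = d" using d by auto
      moreover have "coeff q d \<noteq> 0" using q \<open>degree q = d\<close> by auto
      ultimately show ?thesis using True x q by (auto simp: homog_y_0 proj_pt_def)
    next
      case 3
      hence "degree q = d" "coeff p d = 0" using d by (auto simp: coeff_eq_0)
      thus ?thesis using True x q 3 by (auto simp: homog_y_0 proj_pt_def)
    qed
  qed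
  thus ?thesis using d by (simp add: homog_lift_def bin_form_homog)
qed

lemma homog_lift_unique:
  assumes "homog_lift n F A B" "homog_lift m G A B"
  shows "F = G"
  using assms by (intro rsphere_fun_eqI) (auto simp: homog_lift_def)

lemma homog_lift_comp:
  assumes "homog_lift m F A B" "homog_lift n G C D"
  shows "homog_lift (m*n) (F \<circ> G) (\<lambda>x y. A (C x y) (D x y)) (\<lambda>x y. B (C x y) (D x y))"
  using assms unfolding homog_lift_def by (auto intro: bin_form_compose)

lemma mobius_iff_homog_lift_1: "mobius F \<longleftrightarrow> (\<exists>A B. homog_lift 1 F A B)"
proof
  assume "mobius F"
  thus "\<exists>A B. homog_lift 1 F A B"
    using homog_lift_rat_eval unfolding mobius_def rat_map_deg_def by blast
next
  assume "\<exists>A B. homog_lift 1 F A B"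
  then obtain A B where h: "homog_lift 1 F A B" by blast
  obtain p where p: "degree p \<le> 1" "A = homog 1 p" using h by (auto simp: homog_lift_def bin_form_def)
  obtain q where q: "degree q \<le> 1" "B = homog 1 q" using h by (auto simp: homog_lift_def bin_form_def)
  note nz = homog_liftD(1)[OF h]
  have cp: "coprime p q"
  proof (rule coprime_if_no_common_root)
    fix z assume "poly p z = 0" "poly q z = 0"
    thus False using nz[of z 1] p q by (simp add: homog_y_1)
  qed
  have d: "max (degree p) (degree q) = 1"
  proof (rule ccontr)
    assume "max (degree p) (degree q) \<noteq> 1"
    hence "coeff p 1 = 0" "coeff q 1 = 0" using p q by (auto simp: coeff_eq_0)
    thus False using nz[of 1 0] p q by (simp add: homog_y_0)
  qed
  moreover have q0: "q \<noteq> 0"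
  proof
    assume "q = 0"
    hence "is_unit p" using cp by simp
    hence "degree p = 0" using is_unit_iff_degree[of p] by (cases "p = 0") auto
    thus False using d \<open>q = 0\<close> by simp
  qed
  moreover have "F = rat_eval p q"
    using homog_lift_unique[OF _ homog_lift_rat_eval[OF q0 cp d]] h p(2) q(2) by simp
  ultimately show "mobius F" using cp unfolding mobius_def rat_map_deg_def by blast
qed

lemma homog_lift_agree_card_le:
  assumes F: "homog_lift n F A B" and G: "homog_lift n G C D" and "F \<noteq> G"
  shows "finite {s. F s = G s} \<and> card {s. F s = G s} \<le> n + n"
proof -
  let ?E = "\<lambda>x y. A x y * D x y - B x y * C x y"
  have agree_iff: "F (proj_pt x y) = G (proj_pt x y) \<longleftrightarrow> ?E x y = 0" if "(x,y) \<noteq> (0,0)" for x y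
    using homog_liftD[OF F that] homog_liftD[OF G that] proj_pt_eq_iff by auto
  have "bin_form (n+n) ?E"
    using F G by (auto simp: homog_lift_def intro!: bin_form_diff bin_form_mult)
  moreover have "\<exists>x y. ?E x y \<noteq> 0"
  proof (rule ccontr)
    assume "\<not> (\<exists>x y. ?E x y \<noteq> 0)"
    hence "F = G" using agree_iff by (intro rsphere_fun_eqI) auto
    thus False using \<open>F \<noteq> G\<close> by simp
  qed
  ultimately have "finite (proj_zeros ?E) \<and> card (proj_zeros ?E) \<le> n + n"
    by (rule bin_form_proj_zeros_card_le)
  moreover have "{s. F s = G s} \<subseteq> proj_zeros ?E"
  proof
    fix s assume s: "s \<in> {s. F s = G s}"
    obtain x y where "(x,y) \<noteq> (0,0)" "s = proj_pt x y" using proj_pt_cases by blast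
    thus "s \<in> proj_zeros ?E" using s agree_iff by (auto simp: proj_zeros_def)
  qed
  ultimately show ?thesis by (meson card_mono finite_subset order_trans)
qed

lemma mobius_agree_finite:
  assumes "mobius F" "mobius G" "F \<noteq> G"
  shows "finite {s. F s = G s}"
  using assms homog_lift_agree_card_le unfolding mobius_iff_homog_lift_1 by blast

lemma mobius_inj:
  assumes "mobius F" shows "inj F"
proof -
  obtain A B where h: "homog_lift 1 F A B" using assms mobius_iff_homog_lift_1 by blast
  obtain p where p: "degree p \<le> 1" "A = homog 1 p" using h by (auto simp: homog_lift_def bin_form_def)
  obtain q where q: "degree q \<le> 1" "B = homog 1 q" using h by (auto simp: homog_lift_def bin_form_def)
  note nz = homog_liftD(1)[OF h]
  define a0 a1 b0 b1 where "a0 = coeff p 0" "a1 = coeff p 1" "b0 = coeff q 0" "b1 = coeff q 1"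
  have A: "A x y = a0*y + a1*x" and B: "B x y = b0*y + b1*x" for x y
    unfolding a0_a1_b0_b1_def p(2) q(2) homog_1 by simp_all
  have det: "a1*b0 - a0*b1 \<noteq> 0"
  proof
    assume d: "a1*b0 - a0*b1 = 0"
    have "(b0, -b1) = (0,0)" using nz[of b0 "-b1"] d by (auto simp: A B algebra_simps)
    moreover have "(a0, -a1) = (0,0)" using nz[of a0 "-a1"] d by (auto simp: A B algebra_simps)
    ultimately show False using nz[of 1 0] by (auto simp: A B)
  qed
  show ?thesis
  proof (rule injI)
    fix s t assume st: "F s = F t"
    obtain x y where xy: "(x,y) \<noteq> (0,0)" "s = proj_pt x y" using proj_pt_cases by blast
    obtain u v where uv: "(u,v) \<noteq> (0,0)" "t = proj_pt u v" using proj_pt_cases by blast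
    have "proj_pt (A x y) (B x y) = proj_pt (A u v) (B u v)"
      using st xy uv homog_liftD(2)[OF h] by simp
    hence "A x y * B u v = B x y * A u v" using proj_pt_eq_iff nz xy uv by blast
    hence "(a1*b0 - a0*b1) * (x*v - y*u) = 0" by (simp add: A B algebra_simps)
    thus "s = t" using det xy uv proj_pt_eq_iff by simp
  qed
qed

definition mobius_fun :: "complex \<Rightarrow> complex \<Rightarrow> complex \<Rightarrow> complex \<Rightarrow> rsphere \<Rightarrow> rsphere" where
  "mobius_fun a b c d s = (case s of None \<Rightarrow> proj_pt a c | Some z \<Rightarrow> proj_pt (a*z+b) (c*z+d))"

lemma mobius_fun_proj_pt:
  assumes "(x,y) \<noteq> (0,0)"
  shows "mobius_fun a b c d (proj_pt x y) = proj_pt (a*x+b*y) (c*x+d*y)"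
proof (cases "y = 0")
  case True
  hence "x \<noteq> 0" using assms by auto
  thus ?thesis using True proj_pt_scale[of x a c]
    by (simp add: mobius_fun_def proj_pt_def[of x 0] mult.commute)
next
  case False
  have "proj_pt (a*x+b*y) (c*x+d*y) = proj_pt (y*(a*(x/y)+b)) (y*(c*(x/y)+d))"
    using False by (simp add: algebra_simps)
  also have "\<dots> = proj_pt (a*(x/y)+b) (c*(x/y)+d)" using False by (rule proj_pt_scale)
  finally show ?thesis using False by (simp add: mobius_fun_def proj_pt_def[of x y])
qed

lemma homog_lift_mobius_fun:
  assumes "a*d - b*c \<noteq> 0"
  shows "homog_lift 1 (mobius_fun a b c d) (\<lambda>x y. a*x+b*y) (\<lambda>x y. c*x+d*y)"
  unfolding homog_lift_def
proof (intro conjI allI impI bin_form_linear)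
  fix x y :: complex assume xy: "(x,y) \<noteq> (0,0)"
  show "mobius_fun a b c d (proj_pt x y) = proj_pt (a*x+b*y) (c*x+d*y)"
    using mobius_fun_proj_pt[OF xy] .
  show "(a*x+b*y, c*x+d*y) \<noteq> (0,0)"
  proof
    assume "(a*x+b*y, c*x+d*y) = (0,0)"
    moreover have "(a*d-b*c)*x = d*(a*x+b*y) - b*(c*x+d*y)" "(a*d-b*c)*y = a*(c*x+d*y) - c*(a*x+b*y)"
      by (simp_all add: algebra_simps)
    ultimately show False using xy assms by simp
  qed
qed

lemma mobius_mobius_fun: "a*d - b*c \<noteq> 0 \<Longrightarrow> mobius (mobius_fun a b c d)"
  using homog_lift_mobius_fun mobius_iff_homog_lift_1 by blast

lemma mobius_fun_id: "mobius_fun 1 0 0 1 = id"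
  by (rule rsphere_fun_eqI) (simp add: mobius_fun_proj_pt)

lemma mobius_id: "mobius id"
  using mobius_mobius_fun[of 1 1 0 0] by (simp add: mobius_fun_id)

lemma mobius_comp:
  assumes "mobius F" "mobius G" shows "mobius (F \<circ> G)"
  using assms homog_lift_comp[of 1 F _ _ 1 G] unfolding mobius_iff_homog_lift_1 by fastforce

lemma mobius_interpolate_3:
  assumes w: "w1 \<noteq> w2" "w1 \<noteq> w3" "w2 \<noteq> w3" and v: "v1 \<noteq> v2" "v1 \<noteq> v3" "v2 \<noteq> v3"
  obtains M where "mobius M" "M w1 = v1" "M w2 = v2" "M w3 = v3"
proof -
  obtain a1 b1 where W1: "(a1,b1) \<noteq> (0,0)" "w1 = proj_pt a1 b1" using proj_pt_cases by blast
  obtain a2 b2 where W2: "(a2,b2) \<noteq> (0,0)" "w2 = proj_pt a2 b2" using proj_pt_cases by blast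
  obtain a3 b3 where W3: "(a3,b3) \<noteq> (0,0)" "w3 = proj_pt a3 b3" using proj_pt_cases by blast
  obtain c1 d1 where V1: "(c1,d1) \<noteq> (0,0)" "v1 = proj_pt c1 d1" using proj_pt_cases by blast
  obtain c2 d2 where V2: "(c2,d2) \<noteq> (0,0)" "v2 = proj_pt c2 d2" using proj_pt_cases by blast
  obtain c3 d3 where V3: "(c3,d3) \<noteq> (0,0)" "v3 = proj_pt c3 d3" using proj_pt_cases by blast
  define L1 where "L1 = a3*b2 - a2*b3"
  define L2 where "L2 = a1*b3 - a3*b1"
  define U1 where "U1 = c3*d2 - c2*d3"
  define U2 where "U2 = c1*d3 - c3*d1"
  have dW: "a1*b2 - b1*a2 \<noteq> 0" using w(1) W1 W2 proj_pt_eq_iff[OF W1(1) W2(1)] by simp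
  have dV: "c1*d2 - d1*c2 \<noteq> 0" using v(1) V1 V2 proj_pt_eq_iff[OF V1(1) V2(1)] by simp
  have "L1 \<noteq> 0" using w(3) W3 W2 proj_pt_eq_iff[OF W2(1) W3(1)] by (simp add: L1_def algebra_simps)
  moreover have "L2 \<noteq> 0" using w(2) W1 W3 proj_pt_eq_iff[OF W1(1) W3(1)] by (simp add: L2_def algebra_simps)
  moreover have "U1 \<noteq> 0" using v(3) V3 V2 proj_pt_eq_iff[OF V2(1) V3(1)] by (simp add: U1_def algebra_simps)
  moreover have "U2 \<noteq> 0" using v(2) V1 V3 proj_pt_eq_iff[OF V1(1) V3(1)] by (simp add: U2_def algebra_simps)
  ultimately have k: "U1*L2*(a1*b2 - b1*a2) \<noteq> 0" "U2*L1*(a1*b2 - b1*a2) \<noteq> 0"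
    "L1*L2*(c1*d2 - d1*c2) \<noteq> 0" "U1*U2*(c1*d2 - d1*c2) * (L1*L2*(a1*b2 - b1*a2)) \<noteq> 0"
    using dW dV by simp_all
  \<comment> \<open>The matrix of M is V diag(U1 L2, U2 L1) adj W, where the columns of W and V lift
     w1, w2 and v1, v2; the diagonal scaling makes w3 land on v3.\<close>
  define al where "al = U1*c1*L2*b2 - U2*c2*L1*b1"
  define be where "be = - U1*c1*L2*a2 + U2*c2*L1*a1"
  define ga where "ga = U1*d1*L2*b2 - U2*d2*L1*b1"
  define de where "de = - U1*d1*L2*a2 + U2*d2*L1*a1"
  let ?M = "mobius_fun al be ga de"
  have "al*de - be*ga = U1*U2*(c1*d2 - d1*c2) * (L1*L2*(a1*b2 - b1*a2))"
    unfolding al_def be_def ga_def de_def by algebra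
  hence "mobius ?M" using k(4) by (simp add: mobius_mobius_fun)
  moreover
  have "al*a1 + be*b1 = (U1*L2*(a1*b2 - b1*a2)) * c1" "ga*a1 + de*b1 = (U1*L2*(a1*b2 - b1*a2)) * d1"
       "al*a2 + be*b2 = (U2*L1*(a1*b2 - b1*a2)) * c2" "ga*a2 + de*b2 = (U2*L1*(a1*b2 - b1*a2)) * d2"
       "al*a3 + be*b3 = (L1*L2*(c1*d2 - d1*c2)) * c3" "ga*a3 + de*b3 = (L1*L2*(c1*d2 - d1*c2)) * d3"
    unfolding al_def be_def ga_def de_def L1_def L2_def U1_def U2_def by algebra+
  hence "?M w1 = v1" "?M w2 = v2" "?M w3 = v3"
    using W1 W2 W3 V1 V2 V3 k(1-3) by (simp_all add: mobius_fun_proj_pt proj_pt_scale)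
  ultimately show ?thesis using that by blast
qed

subsection \<open>Monoids isomorphic to the Klein four-group\<close>

lemma klein_four_carrier: "carrier klein_four = {(0,0),(0,1),(1,0),(1,1)}"
  by (auto simp: klein_four_def carrier_integer_mod_group)

lemma klein_four_mult: "(a,b) \<otimes>\<^bsub>klein_four\<^esub> (c,d) = ((a+c) mod 2, (b+d) mod 2)"
  by (simp add: klein_four_def DirProd_def)

lemma klein_four_comm:
  "u \<in> carrier klein_four \<Longrightarrow> v \<in> carrier klein_four \<Longrightarrow> u \<otimes>\<^bsub>klein_four\<^esub> v = v \<otimes>\<^bsub>klein_four\<^esub> u"
  unfolding klein_four_carrier by (auto simp: klein_four_mult)

lemma klein_four_square: "u \<in> carrier klein_four \<Longrightarrow> u \<otimes>\<^bsub>klein_four\<^esub> u = (0,0)"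
  unfolding klein_four_carrier by (auto simp: klein_four_mult)

lemma klein_four_mult_new:
  "u \<in> carrier klein_four \<Longrightarrow> v \<in> carrier klein_four \<Longrightarrow> u \<noteq> (0,0) \<Longrightarrow> v \<noteq> (0,0) \<Longrightarrow> u \<noteq> v
   \<Longrightarrow> u \<otimes>\<^bsub>klein_four\<^esub> v \<notin> {(0,0), u, v}"
  unfolding klein_four_carrier by (auto simp: klein_four_mult)

lemma iso_klein_four_card:
  assumes "G \<cong> klein_four"
  shows "finite (carrier G)" "card (carrier G) = 4"
proof -
  obtain h where "bij_betw h (carrier G) (carrier klein_four)"
    using assms by (auto simp: is_iso_def iso_def)
  thus "finite (carrier G)" "card (carrier G) = 4"
    using bij_betw_finite bij_betw_same_card by (fastforce simp: klein_four_carrier)+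
qed

context monoid
begin

lemma iso_klein_four_commute:
  assumes "G \<cong> klein_four" "a \<in> carrier G" "b \<in> carrier G"
  shows "a \<otimes> b = b \<otimes> a"
proof -
  obtain h where h: "h \<in> iso G klein_four" using assms by (auto simp: is_iso_def)
  hence "h (a \<otimes> b) = h (b \<otimes> a)"
    using assms klein_four_comm by (simp add: iso_def hom_def Pi_iff)
  thus ?thesis using h assms by (auto simp: iso_def bij_betw_def dest: inj_onD)
qed

lemma iso_klein_four_submonoid_eq:
  assumes "G \<cong> klein_four" "submonoid H G" "3 \<le> card H"
  shows "H = carrier G"
proof -
  interpret H: submonoid H G by fact
  obtain h where h: "h \<in> iso G klein_four" using assms by (auto simp: is_iso_def)
  have hom: "\<And>a b. a \<in> carrier G \<Longrightarrow> b \<in> carrier G \<Longrightarrow> h (a \<otimes> b) = h a \<otimes>\<^bsub>klein_four\<^esub> h b"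
    and hin: "\<And>a. a \<in> carrier G \<Longrightarrow> h a \<in> carrier klein_four"
    and inj: "inj_on h (carrier G)"
    using h by (auto simp: iso_def hom_def bij_betw_def)
  have "h \<one> = (0,0)" using hom[of \<one> \<one>] klein_four_square[OF hin[of \<one>]] by simp
  have fin: "finite (carrier G)" and card4: "card (carrier G) = 4"
    using iso_klein_four_card[OF assms(1)] by auto
  have finH: "finite H" using fin H.subset finite_subset by blast
  have "2 \<le> card (H - {\<one>})" using assms(3) finH by (simp add: card_Diff_singleton)
  then obtain a b where ab: "a \<in> H - {\<one>}" "b \<in> H - {\<one>}" "a \<noteq> b"
    by (metis card_le_Suc_iff numeral_2_eq_2 insertCI)
  hence G: "a \<in> carrier G" "b \<in> carrier G" using H.subset by auto
  have "h a \<noteq> (0,0)" "h b \<noteq> (0,0)" "h a \<noteq> h b"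
    using ab G \<open>h \<one> = (0,0)\<close> inj_onD[OF inj] by (metis DiffD2 one_closed singletonI)+
  hence "h (a \<otimes> b) \<notin> {h \<one>, h a, h b}"
    using hom G klein_four_mult_new hin \<open>h \<one> = (0,0)\<close> by simp
  hence "a \<otimes> b \<notin> {\<one>, a, b}" by auto
  hence "card {\<one>, a, b, a \<otimes> b} = 4" using ab by auto
  moreover have "{\<one>, a, b, a \<otimes> b} \<subseteq> H" using ab by auto
  ultimately have "4 \<le> card H" using card_mono[OF finH] by metis
  thus "H = carrier G" using card4 card_subset_eq[OF fin H.subset] card_mono[OF fin H.subset] by simp
qed

end

subsection \<open>Deck groups of iterates\<close>

lemma Deck_comp: "a \<in> Deck F \<Longrightarrow> b \<in> Deck F \<Longrightarrow> a \<circ> b \<in> Deck F"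
  unfolding Deck_def using mobius_comp by (simp add: comp_assoc[symmetric])

lemma id_in_Deck: "id \<in> Deck F"
  using mobius_id by (simp add: Deck_def)

lemma monoid_deck_group: "monoid (deck_group F)"
  by (rule monoidI) (auto simp: deck_group_def Deck_comp id_in_Deck)

lemma Deck_funpow_mono:
  assumes "m \<le> n" shows "Deck (f ^^ m) \<subseteq> Deck (f ^^ n)"
proof
  fix t assume "t \<in> Deck (f ^^ m)"
  hence "mobius t" "f ^^ m \<circ> t = f ^^ m" by (auto simp: Deck_def)
  moreover have "f ^^ n = f ^^ (n - m) \<circ> f ^^ m" using assms by (simp flip: funpow_add)
  ultimately show "t \<in> Deck (f ^^ n)" by (simp add: Deck_def comp_assoc)
qed

lemma submonoid_Deck_funpow:
  "m \<le> n \<Longrightarrow> submonoid (Deck (f ^^ m)) (deck_group (f ^^ n))"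
  by unfold_locales (auto simp: deck_group_def Deck_comp id_in_Deck dest: Deck_funpow_mono)

subsection \<open>Quadratic rational maps\<close>

locale quadratic_rat_map =
  fixes p q :: "complex poly" and f :: "rsphere \<Rightarrow> rsphere"
  assumes q_nonzero: "q \<noteq> 0" and coprime: "coprime p q"
    and degree_eq_2: "max (degree p) (degree q) = 2" and f_eq: "f = rat_eval p q"
begin

abbreviation "A \<equiv> homog 2 p"
abbreviation "B \<equiv> homog 2 q"

lemma homog_lift_f: "homog_lift 2 f A B"
  using homog_lift_rat_eval[OF q_nonzero coprime degree_eq_2] f_eq by simp

lemma fibre_form_nonzero:
  assumes uv: "(u,v) \<noteq> (0,0)"
  shows "\<exists>x y. v * A x y - u * B x y \<noteq> 0"
proof (rule ccontr)
  assume H: "\<not> (\<exists>x y. v * A x y - u * B x y \<noteq> 0)"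
  have "degree p \<le> 2" "degree q \<le> 2" using degree_eq_2 by auto
  moreover have "v * A z 1 = u * B z 1" for z using H by auto
  ultimately have "poly (smult v p - smult u q) z = poly 0 z" for z
    by (simp add: homog_y_1)
  hence "smult v p - smult u q = 0" using poly_eq_poly_eq_iff by blast
  hence E: "smult v p = smult u q" by simp
  show False
  proof (cases "v = 0")
    case True thus False using E uv q_nonzero by simp
  next
    case False
    have pq: "p = smult (u/v) q"
      using arg_cong[OF E, of "smult (inverse v)"] False by (simp add: field_simps)
    hence "q dvd p" by (simp add: dvd_smult)
    hence "is_unit q" using coprime_common_divisor[OF coprime _ dvd_refl] by blast
    hence "degree q = 0" using q_nonzero is_unit_iff_degree by blast
    thus False using pq degree_eq_2 degree_smult_le[of "u/v" q] by simp
  qed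
qed

lemma f_proj_pt_eq_iff:
  assumes "(x,y) \<noteq> (0,0)" "(u,v) \<noteq> (0,0)"
  shows "f (proj_pt x y) = proj_pt u v \<longleftrightarrow> v * A x y - u * B x y = 0"
proof -
  note h = homog_liftD[OF homog_lift_f assms(1)]
  have "f (proj_pt x y) = proj_pt u v \<longleftrightarrow> A x y * v = B x y * u"
    using h proj_pt_eq_iff[OF h(1) assms(2)] by simp
  thus ?thesis by (simp add: mult.commute)
qed

lemma fibre_card_le_2: "finite (f -` {w}) \<and> card (f -` {w}) \<le> 2"
proof -
  obtain u v where uv: "(u,v) \<noteq> (0,0)" "w = proj_pt u v" using proj_pt_cases by blast
  let ?E = "\<lambda>x y. v * A x y - u * B x y"
  have "bin_form 2 ?E"
    using homog_lift_f by (auto simp: homog_lift_def intro!: bin_form_diff bin_form_cmult)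
  hence "finite (proj_zeros ?E) \<and> card (proj_zeros ?E) \<le> 2"
    using bin_form_proj_zeros_card_le fibre_form_nonzero[OF uv(1)] by blast
  moreover have "f -` {w} \<subseteq> proj_zeros ?E"
  proof
    fix s assume s: "s \<in> f -` {w}"
    obtain x y where "(x,y) \<noteq> (0,0)" "s = proj_pt x y" using proj_pt_cases by blast
    thus "s \<in> proj_zeros ?E" using s uv f_proj_pt_eq_iff by (auto simp: proj_zeros_def)
  qed
  ultimately show ?thesis by (meson card_mono finite_subset order_trans)
qed

lemma surj_f: "surj f"
proof -
  have "w \<in> range f" for w
  proof -
    obtain u v where uv: "(u,v) \<noteq> (0,0)" "w = proj_pt u v" using proj_pt_cases by blast
    have "bin_form 2 (\<lambda>x y. v * A x y - u * B x y)"
      using homog_lift_f by (auto simp: homog_lift_def intro!: bin_form_diff bin_form_cmult)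
    then obtain x y where "(x,y) \<noteq> (0,0)" "v * A x y - u * B x y = 0"
      by (rule bin_form_has_proj_zero) simp
    thus ?thesis using f_proj_pt_eq_iff uv by (metis rangeI)
  qed
  thus ?thesis by blast
qed

lemma Deck_no_three_distinct:
  assumes "t0 \<in> Deck f" "t1 \<in> Deck f" "t2 \<in> Deck f" "t0 \<noteq> t1" "t0 \<noteq> t2" "t1 \<noteq> t2"
  shows False
proof -
  have mob: "mobius t0" "mobius t1" "mobius t2" and inv: "f \<circ> t0 = f" "f \<circ> t1 = f" "f \<circ> t2 = f"
    using assms by (auto simp: Deck_def)
  have "finite ({s. t0 s = t1 s} \<union> {s. t0 s = t2 s} \<union> {s. t1 s = t2 s})"
    using mob assms(4-6) by (simp add: mobius_agree_finite)
  from ex_rsphere_not_in[OF this] obtain s where s: "t0 s \<noteq> t1 s" "t0 s \<noteq> t2 s" "t1 s \<noteq> t2 s"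
    by blast
  have "{t0 s, t1 s, t2 s} \<subseteq> f -` {f s}" using inv by (auto simp: fun_eq_iff)
  hence "card {t0 s, t1 s, t2 s} \<le> 2"
    using fibre_card_le_2[of "f s"] by (meson card_mono order_trans)
  thus False using s by simp
qed

abbreviation "p0 \<equiv> coeff p 0"
abbreviation "p1 \<equiv> coeff p 1"
abbreviation "p2 \<equiv> coeff p 2"
abbreviation "q0 \<equiv> coeff q 0"
abbreviation "q1 \<equiv> coeff q 1"
abbreviation "q2 \<equiv> coeff q 2"

lemma A_eq: "A x y = p0*y^2 + p1*x*y + p2*x^2"
  and B_eq: "B x y = q0*y^2 + q1*x*y + q2*x^2"
  by (simp_all add: homog_2)

lemma leading_coeffs_nonzero: "(p2, q2) \<noteq> (0,0)"
proof -
  have "degree p = 2 \<or> degree q = 2" using degree_eq_2 by linarith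
  moreover have "coeff r (degree r) \<noteq> 0" if "degree r = 2" for r :: "complex poly"
    using that by (metis degree_0 leading_coeff_0_iff zero_neq_numeral)
  ultimately show ?thesis by auto
qed

text \<open>
  The deck involution \<iota> of f has the traceless matrix below, built from the 2 \<times> 2 minors of the
  coefficient matrix of p and q; substituting it into A and B multiplies both by the resultant.
\<close>

definition res :: complex where
  "res = (p2*q0 - p0*q2)^2 - (p2*q1 - p1*q2)*(p1*q0 - p0*q1)"

definition iota_x :: "complex \<Rightarrow> complex \<Rightarrow> complex" where
  "iota_x x y = (p0*q2 - p2*q0)*x + (p0*q1 - p1*q0)*y"

definition iota_y :: "complex \<Rightarrow> complex \<Rightarrow> complex" where
  "iota_y x y = (p2*q1 - p1*q2)*x + (p2*q0 - p0*q2)*y"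

definition iota :: "rsphere \<Rightarrow> rsphere" where
  "iota = mobius_fun (p0*q2 - p2*q0) (p0*q1 - p1*q0) (p2*q1 - p1*q2) (p2*q0 - p0*q2)"

lemma A_iota: "A (iota_x x y) (iota_y x y) = res * A x y"
  unfolding A_eq iota_x_def iota_y_def res_def by algebra

lemma B_iota: "B (iota_x x y) (iota_y x y) = res * B x y"
  unfolding B_eq iota_x_def iota_y_def res_def by algebra

lemma res_nonzero: "res \<noteq> 0"
proof
  assume "res = 0"
  have "(iota_x x y, iota_y x y) = (0,0)" for x y
  proof (rule ccontr)
    assume "(iota_x x y, iota_y x y) \<noteq> (0,0)"
    from homog_liftD(1)[OF homog_lift_f this] show False
      using A_iota B_iota \<open>res = 0\<close> by simp
  qed
  from this[of 1 0] this[of 0 1] have "p0*q2 = p2*q0" "p2*q1 = p1*q2"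
    by (simp_all add: iota_x_def iota_y_def)
  hence "q2 * A x y - p2 * B x y = 0" for x y
    unfolding A_eq B_eq by (simp add: algebra_simps)
  thus False using fibre_form_nonzero[OF leading_coeffs_nonzero] by blast
qed

lemma homog_lift_iota: "homog_lift 1 iota iota_x iota_y"
proof -
  have "(p0*q2 - p2*q0)*(p2*q0 - p0*q2) - (p0*q1 - p1*q0)*(p2*q1 - p1*q2) = - res"
    unfolding res_def by (simp add: algebra_simps power2_eq_square)
  hence "(p0*q2 - p2*q0)*(p2*q0 - p0*q2) - (p0*q1 - p1*q0)*(p2*q1 - p1*q2) \<noteq> 0"
    using res_nonzero by simp
  from homog_lift_mobius_fun[OF this] show ?thesis
    unfolding iota_def iota_x_def[abs_def] iota_y_def[abs_def] .
qed

lemma f_comp_iota: "f \<circ> iota = f"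
proof (rule rsphere_fun_eqI)
  fix x y :: complex assume xy: "(x,y) \<noteq> (0,0)"
  note i = homog_liftD[OF homog_lift_iota xy]
  have "(f \<circ> iota) (proj_pt x y) = proj_pt (res * A x y) (res * B x y)"
    using homog_liftD(2)[OF homog_lift_f i(1)] i(2) A_iota B_iota by simp
  also have "\<dots> = f (proj_pt x y)"
    using proj_pt_scale[OF res_nonzero] homog_liftD(2)[OF homog_lift_f xy] by simp
  finally show "(f \<circ> iota) (proj_pt x y) = f (proj_pt x y)" .
qed

lemma iota_in_Deck: "iota \<in> Deck f"
  using homog_lift_iota f_comp_iota mobius_iff_homog_lift_1 by (auto simp: Deck_def)

lemma iota_ne_id: "iota \<noteq> id"
proof
  assume "iota = id"
  have e: "iota_x x y * y = iota_y x y * x" if "(x,y) \<noteq> (0,0)" for x y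
  proof -
    have "proj_pt (iota_x x y) (iota_y x y) = proj_pt x y"
      using homog_liftD(2)[OF homog_lift_iota that] \<open>iota = id\<close> by simp
    thus ?thesis using proj_pt_eq_iff[OF homog_liftD(1)[OF homog_lift_iota that] that] by simp
  qed
  have "p2*q1 = p1*q2" using e[of 1 0] by (simp add: iota_y_def)
  moreover have "p0*q1 = p1*q0" using e[of 0 1] by (simp add: iota_x_def)
  moreover have "(p0*q2 - p2*q0) + (p0*q1 - p1*q0) = (p2*q1 - p1*q2) + (p2*q0 - p0*q2)"
    using e[of 1 1] by (simp add: iota_x_def iota_y_def)
  ultimately have "p0*q2 = p2*q0" by simp
  hence "res = 0" using \<open>p2*q1 = p1*q2\<close> unfolding res_def by simp
  thus False using res_nonzero by simp
qed

lemma Deck_eq: "Deck f = {id, iota}"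
proof
  show "Deck f \<subseteq> {id, iota}"
  proof
    fix t assume t: "t \<in> Deck f"
    show "t \<in> {id, iota}"
    proof (rule ccontr)
      assume "t \<notin> {id, iota}"
      show False
        by (rule Deck_no_three_distinct[OF id_in_Deck iota_in_Deck t])
           (use \<open>t \<notin> {id, iota}\<close> iota_ne_id in auto)
    qed
  qed
  show "{id, iota} \<subseteq> Deck f" using id_in_Deck iota_in_Deck by simp
qed

lemma not_iso_klein_four: "\<not> deck_group f \<cong> klein_four"
proof
  assume "deck_group f \<cong> klein_four"
  hence "card (carrier (deck_group f)) = 4" by (rule iso_klein_four_card(2))
  hence "card (Deck f) = 4" by (simp add: deck_group_def)
  thus False using Deck_eq iota_ne_id by simp
qed

lemma generic_points:
  assumes "inj t"
  obtains z1 z2 z3 where "iota z1 \<noteq> z1" "iota z2 \<noteq> z2" "iota z3 \<noteq> z3"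
    "f z1 \<noteq> f z2" "f z1 \<noteq> f z3" "f z2 \<noteq> f z3"
    "f (t z1) \<noteq> f (t z2)" "f (t z1) \<noteq> f (t z3)" "f (t z2) \<noteq> f (t z3)"
proof -
  have fixed: "finite {s. iota s = s}"
    using mobius_agree_finite[of iota id] iota_in_Deck mobius_id iota_ne_id by (simp add: Deck_def)
  let ?bad = "\<lambda>z. f -` {f z} \<union> (f \<circ> t) -` {f (t z)}"
  have bad: "finite (?bad z)" for z
    using fibre_card_le_2 finite_vimageI[OF _ assms] by (simp flip: vimage_comp)
  obtain z1 where z1: "z1 \<notin> {s. iota s = s}" using ex_rsphere_not_in[OF fixed] by blast
  from ex_rsphere_not_in[OF finite_UnI[OF fixed bad]]
  obtain z2 where z2: "z2 \<notin> {s. iota s = s} \<union> ?bad z1" by blast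
  from ex_rsphere_not_in[OF finite_UnI[OF finite_UnI[OF fixed bad] bad]]
  obtain z3 where z3: "z3 \<notin> {s. iota s = s} \<union> ?bad z1 \<union> ?bad z2" by blast
  show ?thesis by (rule that[of z1 z2 z3]) (use z1 z2 z3 in auto)
qed

lemma descends_if_commutes_iota:
  assumes t: "mobius t" and comm: "t \<circ> iota = iota \<circ> t"
  obtains M where "mobius M" "f \<circ> t = M \<circ> f"
proof -
  have f_iota: "f (iota s) = f s" for s using fun_cong[OF f_comp_iota, of s] by simp
  have ft_iota: "f (t (iota s)) = f (t s)" for s using fun_cong[OF comm, of s] f_iota by simp
  obtain z1 z2 z3 where nfix: "iota z1 \<noteq> z1" "iota z2 \<noteq> z2" "iota z3 \<noteq> z3"
    and df: "f z1 \<noteq> f z2" "f z1 \<noteq> f z3" "f z2 \<noteq> f z3"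
    and dft: "f (t z1) \<noteq> f (t z2)" "f (t z1) \<noteq> f (t z3)" "f (t z2) \<noteq> f (t z3)"
    using generic_points[OF mobius_inj[OF t]] by blast
  obtain M where M: "mobius M" "M (f z1) = f (t z1)" "M (f z2) = f (t z2)" "M (f z3) = f (t z3)"
    using mobius_interpolate_3[OF df dft] by blast
  have "f \<circ> t = M \<circ> f"
  proof (rule ccontr)
    assume ne: "f \<circ> t \<noteq> M \<circ> f"
    obtain At Bt where "homog_lift 1 t At Bt" using t mobius_iff_homog_lift_1 by blast
    from homog_lift_comp[OF homog_lift_f this]
    have ft: "homog_lift 2 (f \<circ> t) (\<lambda>x y. A (At x y) (Bt x y)) (\<lambda>x y. B (At x y) (Bt x y))"
      by simp
    obtain AM BM where "homog_lift 1 M AM BM" using M(1) mobius_iff_homog_lift_1 by blast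
    from homog_lift_comp[OF this homog_lift_f]
    have Mf: "homog_lift 2 (M \<circ> f) (\<lambda>x y. AM (A x y) (B x y)) (\<lambda>x y. BM (A x y) (B x y))"
      by simp
    let ?S = "{s. (f \<circ> t) s = (M \<circ> f) s}"
    have S: "finite ?S" "card ?S \<le> 4" using homog_lift_agree_card_le[OF ft Mf ne] by simp_all
    have "{z1, z2, z3, iota z1, iota z2, iota z3} \<subseteq> ?S" by (simp add: M ft_iota f_iota)
    hence "card {z1, z2, z3, iota z1, iota z2, iota z3} \<le> 4"
      using order_trans[OF card_mono[OF S(1)] S(2)] by blast
    moreover have "z1 \<noteq> iota z2" "z1 \<noteq> iota z3" "z2 \<noteq> iota z3"
      "iota z1 \<noteq> z2" "iota z1 \<noteq> z3" "iota z2 \<noteq> z3"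
      "iota z1 \<noteq> iota z2" "iota z1 \<noteq> iota z3" "iota z2 \<noteq> iota z3"
      "z1 \<noteq> z2" "z1 \<noteq> z3" "z2 \<noteq> z3"
      using df f_iota by metis+
    ultimately show False using nfix by simp
  qed
  thus ?thesis using M(1) that by blast
qed

lemma Deck_funpow_extra_element:
  assumes j: "2 \<le> j" and t: "t \<in> Deck (f ^^ Suc j)" "t \<notin> {id, iota}"
    and comm: "t \<circ> iota = iota \<circ> t"
  obtains x where "x \<in> Deck (f ^^ j)" "x \<notin> {id, iota}"
proof -
  have "mobius t" "f ^^ Suc j \<circ> t = f ^^ Suc j"
    using t(1) by (simp_all add: Deck_def del: funpow.simps)
  hence inv: "f ^^ j \<circ> (f \<circ> t) = f ^^ j \<circ> f" by (simp only: funpow_Suc_right comp_assoc)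
  obtain M where M: "mobius M" "f \<circ> t = M \<circ> f"
    using descends_if_commutes_iota[OF \<open>mobius t\<close> comm] by blast
  have "f ^^ j \<circ> M = f ^^ j"
  proof
    fix w obtain s where "w = f s" using surj_f by blast
    thus "(f ^^ j \<circ> M) w = (f ^^ j) w" using inv M(2) by (metis comp_apply comp_assoc)
  qed
  hence M_Deck: "M \<in> Deck (f ^^ j)" using M(1) by (simp add: Deck_def)
  consider "M = id" | "M = iota" | "M \<notin> {id, iota}" by blast
  thus ?thesis
  proof cases
    case 1
    hence "t \<in> Deck f" using M \<open>mobius t\<close> by (simp add: Deck_def)
    thus ?thesis using t(2) Deck_eq by blast
  next
    case 2
    have "f ^^ 2 \<circ> t = f \<circ> iota \<circ> f" using M 2 by (simp add: numeral_2_eq_2 comp_assoc)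
    hence "t \<in> Deck (f ^^ 2)" using \<open>mobius t\<close> f_comp_iota by (simp add: Deck_def numeral_2_eq_2)
    thus ?thesis using that t(2) Deck_funpow_mono[OF j] by blast
  next
    case 3 thus ?thesis using that M_Deck by blast
  qed
qed

lemma Deck_funpow_eq_Suc:
  assumes j: "2 \<le> j" and K: "deck_group (f ^^ Suc j) \<cong> klein_four"
  shows "Deck (f ^^ j) = Deck (f ^^ Suc j)"
proof -
  interpret G: monoid "deck_group (f ^^ Suc j)" by (rule monoid_deck_group)
  have card4: "card (Deck (f ^^ Suc j)) = 4" and fin: "finite (Deck (f ^^ Suc j))"
    using iso_klein_four_card[OF K] by (simp_all add: deck_group_def)
  have iota_Deck: "iota \<in> Deck (f ^^ i)" if "1 \<le> i" for i
    using Deck_funpow_mono[OF that] iota_in_Deck by auto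
  have "{id, iota} \<subseteq> Deck (f ^^ Suc j)"
    using id_in_Deck iota_Deck[of "Suc j"] by (simp del: funpow.simps)
  hence "card (Deck (f ^^ Suc j) - {id, iota}) = 2"
    using card4 iota_ne_id by (simp add: card_Diff_subset)
  then obtain t where t: "t \<in> Deck (f ^^ Suc j)" "t \<notin> {id, iota}"
    by (metis Diff_iff card.empty ex_in_conv zero_neq_numeral)
  have "t \<circ> iota = iota \<circ> t"
    using G.iso_klein_four_commute[OF K] t(1) iota_Deck[of "Suc j"]
    by (simp add: deck_group_def del: funpow.simps)
  then obtain x where x: "x \<in> Deck (f ^^ j)" "x \<notin> {id, iota}"
    using Deck_funpow_extra_element[OF j t] by blast
  have sub: "{id, iota, x} \<subseteq> Deck (f ^^ j)" using x id_in_Deck iota_Deck j by simp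
  have "finite (Deck (f ^^ j))"
    using finite_subset[OF Deck_funpow_mono[of j "Suc j" f] fin] by simp
  moreover have "card {id, iota, x} = 3" using x(2) iota_ne_id by auto
  ultimately have "3 \<le> card (Deck (f ^^ j))" using card_mono[OF _ sub] by metis
  from G.iso_klein_four_submonoid_eq[OF K submonoid_Deck_funpow this]
  show ?thesis by (simp add: deck_group_def del: funpow.simps)
qed

lemma iso_klein_four_funpow_2:
  assumes "2 \<le> k" "deck_group (f ^^ k) \<cong> klein_four"
  shows "deck_group (f ^^ 2) \<cong> klein_four"
  using assms
proof (induction k rule: dec_induct)
  case (step j)
  have "Deck (f ^^ j) = Deck (f ^^ Suc j)" by (rule Deck_funpow_eq_Suc[OF step.hyps(1) step.prems])
  hence "deck_group (f ^^ j) \<cong> klein_four" using step.prems by (simp only: deck_group_def)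
  thus ?case by (rule step.IH)
qed

end

theorem mainTheorem11:
  fixes f :: "rsphere \<Rightarrow> rsphere"
  assumes "rat_map_deg 2 f"
    and "\<exists>k::nat. k \<ge> 1 \<and> deck_group (f ^^ k) \<cong> klein_four"
  shows "(LEAST k::nat. k \<ge> 1 \<and> deck_group (f ^^ k) \<cong> klein_four) = 2"
proof -
  obtain p q where "q \<noteq> 0" "coprime p q" "max (degree p) (degree q) = 2" "f = rat_eval p q"
    using assms(1) unfolding rat_map_deg_def by blast
  then interpret quadratic_rat_map p q f by unfold_locales
  obtain k where k: "k \<ge> 1" "deck_group (f ^^ k) \<cong> klein_four" using assms(2) by blast
  have "k \<noteq> 1" using k(2) not_iso_klein_four by auto
  hence iso_2: "deck_group (f ^^ 2) \<cong> klein_four" using iso_klein_four_funpow_2[of k] k by simp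
  show ?thesis
  proof (rule Least_equality)
    show "2 \<ge> (1::nat) \<and> deck_group (f ^^ 2) \<cong> klein_four" using iso_2 by simp
  next
    fix m :: nat assume "m \<ge> 1 \<and> deck_group (f ^^ m) \<cong> klein_four"
    thus "2 \<le> m" using not_iso_klein_four by (cases "m = 1") auto
  qed
qed

end
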